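(* For every $u_0\in\mathbb{R}$ there exist $\delta>0$ and a unique function $u\in C^2([0,\delta))$ with $u(0)=u_0$, $u'(0)=0$, solving $$\frac{d}{d\theta}\left(\frac{\sin\theta\,u'}{(1+u'^2)^2}\right)=\sin\theta\,\frac{u'^2-1}{(1+u'^2)^2}\qquad\text{for }\theta\in(0,\delta).$$ Moreover $u''(0)=-\tfrac12$, $u$ is strictly concave on $[0,\delta)$, and $u(\theta)=u_0-\tfrac14\theta^2+O(\theta^4)$ as $\theta\to0$.
   Context: The displayed ODE is the Euler–Lagrange equation of $R_2[u]=\int\frac{e^{-2u}}{1+|\nabla_{\mathbb{S}^2}u|^2}\,d\Omega$ restricted to rotationally symmetric functions $u=u(\theta)$, where $\theta$ is the colatitude on $\mathbb{S}^2$ (so $\theta=0$ is the pole on the rotation axis). *)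

theory Defs
  imports "HOL-Analysis.Analysis" "HOL-Library.Landau_Symbols"
begin

definition strictly_concave_on :: "real set \<Rightarrow> (real \<Rightarrow> real) \<Rightarrow> bool" where
  "strictly_concave_on S f \<longleftrightarrow> convex S \<and>
     (\<forall>x\<in>S. \<forall>y\<in>S. x \<noteq> y \<longrightarrow> (\<forall>t. 0 < t \<and> t < 1 \<longrightarrow>
        f ((1 - t) * x + t * y) > (1 - t) * f x + t * f y))"

definition C2_on_halfopen :: "real \<Rightarrow> (real \<Rightarrow> real) \<Rightarrow> (real \<Rightarrow> real) \<Rightarrow> (real \<Rightarrow> real) \<Rightarrow> bool" where
  "C2_on_halfopen \<delta> u u1 u2 \<longleftrightarrow>
     (\<forall>t\<in>{0..<\<delta>}. (u has_real_derivative u1 t) (at t within {0..<\<delta>}) \<and>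
                    (u1 has_real_derivative u2 t) (at t within {0..<\<delta>})) \<and>
     continuous_on {0..<\<delta>} u2"

definition EL_solution :: "real \<Rightarrow> real \<Rightarrow> (real \<Rightarrow> real) \<Rightarrow> (real \<Rightarrow> real) \<Rightarrow> (real \<Rightarrow> real) \<Rightarrow> bool" where
  "EL_solution u0 \<delta> u u1 u2 \<longleftrightarrow>
     C2_on_halfopen \<delta> u u1 u2 \<and> u 0 = u0 \<and> u1 0 = 0 \<and>
     (\<forall>\<theta>\<in>{0<..<\<delta>}.
        ((\<lambda>t. sin t * u1 t / (1 + (u1 t)^2)^2) has_real_derivative
           (sin \<theta> * ((u1 \<theta>)^2 - 1) / (1 + (u1 \<theta>)^2)^2)) (at \<theta>))"

end

theory Submission
  imports Defs
begin

(* Writing q = u', the equation says that sin t * F (q t) has derivative sin t * G (q t), where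
   F x = x / (1 + x^2)^2 and G x = (x^2 - 1) / (1 + x^2)^2.  Integrating from the pole, a solution
   with q 0 = 0 is a fixed point of
     q  |->  q - F q + (1 / sin t) * integral_0^t sin s * G (q s) ds,
   which is a contraction on the continuous functions in the band |q t + t/2| <= 20 t^3, 0 <= t <= 1/10,
   because F'(0) = 1; the band is preserved because G is close to -1 near 0, so that the integral
   term is close to -(1 - cos t) / sin t = -t/2 + O(t^3).  Implicit differentiation of the integrated
   equation shows that q is C^1 with q'(0) = -1/2 and q' < 0, so u = u0 + integral_0^t q is a strictly
   concave C^2 solution, and the band gives u = u0 - t^2/4 + O(t^4).
   Uniqueness: where two solutions q1, q2 start to differ, F is bi-Lipschitz and G is Lipschitz on
   the relevant range, so on a short interval the integrated equation bounds |q1 - q2| by a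
   fraction of its own maximum; a continuation argument covers [0, 1/10). *)

lemma abs_div_le_abs: "1 \<le> b \<Longrightarrow> \<bar>a / b\<bar> \<le> \<bar>a\<bar>" for a b :: real
  by (simp add: abs_divide divide_le_eq mult_le_cancel_left1)

lemma has_real_derivative_implicit:
  fixes F p h :: "real \<Rightarrow> real"
  assumes F: "(F has_real_derivative D) (at (p x))" and D: "D \<noteq> 0"
    and p: "isCont p x"
    and eq: "eventually (\<lambda>t. F (p t) = h t) (nhds x)"
    and h: "(h has_real_derivative H) (at x)"
  shows "(p has_real_derivative H / D) (at x)"
proof -
  obtain g where g: "\<And>z. F z - F (p x) = g z * (z - p x)" and "isCont g (p x)" and "g (p x) = D"
    using F unfolding CARAT_DERIV by blast
  then have "isCont (\<lambda>y. g (p y)) x"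
    using isCont_o2[OF p] by blast
  then have lim_g: "((\<lambda>y. g (p y)) \<longlongrightarrow> D) (at x)"
    using \<open>g (p x) = D\<close> by (simp add: isCont_def)
  have hx: "F (p x) = h x"
    using eventually_nhds_x_imp_x[OF eq] .
  have "eventually (\<lambda>t. F (p t) = h t) (at x)"
    using eq unfolding eventually_at_filter by (auto elim: eventually_mono)
  then have "eventually (\<lambda>y. ((h y - h x) / (y - x)) / g (p y) = (p y - p x) / (y - x)) (at x)"
    using tendsto_imp_eventually_ne[OF lim_g D]
  proof eventually_elim
    case (elim y)
    have "h y - h x = g (p y) * (p y - p x)"
      using g[of "p y"] elim(1) hx by simp
    then show ?case
      using elim(2) by simp
  qed
  moreover have "((\<lambda>y. ((h y - h x) / (y - x)) / g (p y)) \<longlongrightarrow> H / D) (at x)"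
    using h D lim_g by (intro tendsto_divide) (auto simp: has_field_derivative_iff)
  ultimately show ?thesis
    by (simp add: has_field_derivative_iff Lim_transform_eventually)
qed

lemma MVT_interior:
  fixes f f' :: "real \<Rightarrow> real"
  assumes "a < b" "continuous_on {a..b} f"
    and "\<And>x. a < x \<Longrightarrow> x < b \<Longrightarrow> (f has_real_derivative f' x) (at x)"
  obtains z where "a < z" "z < b" "f b - f a = (b - a) * f' z"
proof -
  obtain l z where "a < z" "z < b" "(f has_real_derivative l) (at z)" "f b - f a = (b - a) * l"
    using MVT[OF assms(1,2)] assms(3) real_differentiable_def by blast
  moreover have "l = f' z"
    using DERIV_unique calculation(3) assms(3)[OF calculation(1,2)] by blast
  ultimately show ?thesis
    using that by blast
qed

lemma chord_below_of_derivative_decreasing: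
  fixes f f' :: "real \<Rightarrow> real"
  assumes cont: "continuous_on {x..y} f"
    and deriv: "\<And>z. x < z \<Longrightarrow> z < y \<Longrightarrow> (f has_real_derivative f' z) (at z)"
    and decreasing: "\<And>z w. x < z \<Longrightarrow> z < w \<Longrightarrow> w < y \<Longrightarrow> f' w < f' z"
    and "x < y" "0 < t" "t < 1"
  shows "(1 - t) * f x + t * f y < f ((1 - t) * x + t * y)"
proof -
  define z where "z = (1 - t) * x + t * y"
  have zx: "z - x = t * (y - x)" and yz: "y - z = (1 - t) * (y - x)"
    unfolding z_def by (simp_all add: algebra_simps)
  then have "x < z" "z < y"
    using assms(4-6) by (metis diff_gt_0_iff_gt mult_pos_pos)+
  have cont_sub: "continuous_on {c..d} f" if "x \<le> c" "d \<le> y" for c d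
    by (rule continuous_on_subset[OF cont]) (use that in auto)
  obtain \<xi> where \<xi>: "x < \<xi>" "\<xi> < z" "f z - f x = (z - x) * f' \<xi>"
    using MVT_interior[OF \<open>x < z\<close> cont_sub, of f'] deriv \<open>z < y\<close> by auto
  obtain \<eta> where \<eta>: "z < \<eta>" "\<eta> < y" "f y - f z = (y - z) * f' \<eta>"
    using MVT_interior[OF \<open>z < y\<close> cont_sub, of f'] deriv \<open>x < z\<close> by auto
  have "t * (1 - t) * (y - x) * f' \<eta> < t * (1 - t) * (y - x) * f' \<xi>"
    using decreasing[of \<xi> \<eta>] \<xi> \<eta> assms(4-6) by (intro mult_strict_left_mono) auto
  then have "t * (f y - f z) < (1 - t) * (f z - f x)"
    unfolding \<xi>(3) \<eta>(3) zx yz by (simp add: algebra_simps)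
  then show ?thesis
    unfolding z_def[symmetric] by (simp add: algebra_simps)
qed

lemma strictly_concave_on_atLeastLessThan:
  fixes f f' :: "real \<Rightarrow> real"
  assumes cont: "continuous_on {a..<b} f"
    and deriv: "\<And>x. a < x \<Longrightarrow> x < b \<Longrightarrow> (f has_real_derivative f' x) (at x)"
    and decreasing: "\<And>x y. a < x \<Longrightarrow> x < y \<Longrightarrow> y < b \<Longrightarrow> f' y < f' x"
  shows "strictly_concave_on {a..<b} f"
proof -
  have chord: "(1 - t) * f x + t * f y < f ((1 - t) * x + t * y)"
    if "x \<in> {a..<b}" "y \<in> {a..<b}" "x < y" "0 < t" "t < 1" for x y t
  proof (rule chord_below_of_derivative_decreasing[where f' = f'])
    show "continuous_on {x..y} f"
      by (rule continuous_on_subset[OF cont]) (use that in auto)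
  qed (use that deriv decreasing in auto)
  show ?thesis
    unfolding strictly_concave_on_def
  proof (intro conjI ballI impI allI)
    fix x y t :: real
    assume xy: "x \<in> {a..<b}" "y \<in> {a..<b}" "x \<noteq> y" and t: "0 < t \<and> t < 1"
    consider "x < y" | "y < x"
      using xy(3) by linarith
    then show "(1 - t) * f x + t * f y < f ((1 - t) * x + t * y)"
    proof cases
      case 1
      then show ?thesis
        using chord xy t by blast
    next
      case 2
      then have "(1 - (1 - t)) * f y + (1 - t) * f x < f ((1 - (1 - t)) * y + (1 - t) * x)"
        using chord[of y x "1 - t"] xy t by auto
      then show ?thesis
        by (simp add: algebra_simps)
    qed
  qed simp
qed

lemma eq_at_right_endpoint:
  fixes f g :: "real \<Rightarrow> real"
  assumes "a < t" "continuous_on {a..t} f" "continuous_on {a..t} g"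
    and "\<And>s. a \<le> s \<Longrightarrow> s < t \<Longrightarrow> f s = g s"
  shows "f t = g t"
proof -
  have "((\<lambda>s. f s - g s) \<longlongrightarrow> f t - g t) (at t within {a..t})"
    using assms(1-3) unfolding continuous_on_def by (auto intro: tendsto_diff)
  then have "((\<lambda>s. f s - g s) \<longlongrightarrow> f t - g t) (at_left t)"
    using at_within_Icc_at_left[OF \<open>a < t\<close>] by simp
  moreover have "eventually (\<lambda>s. f s - g s = 0) (at_left t)"
    using eventually_at_left_real[OF \<open>a < t\<close>] by eventually_elim (simp add: assms(4))
  then have "((\<lambda>s. f s - g s) \<longlongrightarrow> 0) (at_left t)"
    by (rule tendsto_eventually)
  ultimately have "f t - g t = 0"
    using tendsto_unique[OF trivial_limit_at_left_real] by blast
  then show ?thesis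
    by simp
qed

lemma eq_on_atLeastLessThan_by_continuation:
  fixes f g :: "real \<Rightarrow> real"
  assumes cont: "continuous_on {a..<b} f" "continuous_on {a..<b} g"
    and start: "f a = g a"
    and step: "\<And>t. t \<in> {a..<b} \<Longrightarrow> f t = g t \<Longrightarrow> \<exists>e>0. \<forall>s. t \<le> s \<and> s < t + e \<longrightarrow> f s = g s"
    and t: "t \<in> {a..<b}"
  shows "f t = g t"
proof (rule ccontr)
  define A where "A = {s \<in> {a..<b}. f s \<noteq> g s}"
  assume "f t \<noteq> g t"
  then have "t \<in> A"
    using t by (simp add: A_def)
  have bdd: "bdd_below A"
    unfolding A_def by (rule bdd_belowI[of _ a]) auto
  define t0 where "t0 = Inf A"
  have "a \<le> t0"
    unfolding t0_def by (rule cInf_greatest) (use \<open>t \<in> A\<close> in \<open>auto simp: A_def\<close>)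
  moreover have "t0 \<le> t"
    unfolding t0_def by (rule cInf_lower[OF \<open>t \<in> A\<close> bdd])
  ultimately have t0: "t0 \<in> {a..<b}"
    using t by auto
  have below: "f s = g s" if "a \<le> s" "s < t0" for s
  proof (rule ccontr)
    assume "f s \<noteq> g s"
    then have "s \<in> A"
      using that t0 by (simp add: A_def)
    then have "t0 \<le> s"
      unfolding t0_def by (rule cInf_lower[OF _ bdd])
    then show False
      using that by simp
  qed
  have "f t0 = g t0"
  proof (cases "t0 = a")
    case False
    then have "a < t0"
      using \<open>a \<le> t0\<close> by simp
    moreover have sub: "{a..t0} \<subseteq> {a..<b}"
      using t0 by auto
    ultimately show ?thesis
      using eq_at_right_endpoint[OF _ continuous_on_subset[OF cont(1) sub]
          continuous_on_subset[OF cont(2) sub] below] by blast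
  qed (use start in simp)
  then obtain e where "e > 0" and e: "\<And>s. t0 \<le> s \<Longrightarrow> s < t0 + e \<Longrightarrow> f s = g s"
    using step[OF t0] by blast
  then obtain s where "s \<in> A" "s < t0 + e"
    using cInf_less_iff[of A "t0 + e"] \<open>t \<in> A\<close> bdd by (auto simp: t0_def)
  moreover have "t0 \<le> s"
    unfolding t0_def by (rule cInf_lower[OF \<open>s \<in> A\<close> bdd])
  ultimately show False
    using e by (simp add: A_def)
qed

lemma abs_sin_sub_le: "\<bar>sin x - x\<bar> \<le> \<bar>x\<bar>^3 / 6" for x :: real
proof -
  have "\<bar>sin x - (\<Sum>m<3. sin_coeff m * x ^ m)\<bar> \<le> inverse (fact 3) * \<bar>x\<bar> ^ 3"
    by (rule Maclaurin_sin_bound)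
  moreover have "(\<Sum>m<3. sin_coeff m * x ^ m) = x"
    by (simp add: sin_coeff_def eval_nat_numeral)
  ultimately show ?thesis
    by (simp add: eval_nat_numeral)
qed

lemma abs_cos_sub_le: "\<bar>cos x - (1 - x^2 / 2)\<bar> \<le> x^4 / 24" for x :: real
proof -
  obtain t where t: "cos x = (\<Sum>m<4. cos_coeff m * x ^ m) + cos (t + 1/2 * real 4 * pi) / fact 4 * x ^ 4"
    using Maclaurin_cos_expansion[of x 4] by blast
  have "{..<4::nat} = {0, 1, 2, 3}"
    by auto
  then have "(\<Sum>m<4. cos_coeff m * x ^ m) = 1 - x^2 / 2"
    by (simp add: cos_coeff_def)
  moreover have "\<bar>cos (t + 1/2 * real 4 * pi) / fact 4 * x ^ 4\<bar> \<le> 1/24 * x^4"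
  proof -
    have "fact 4 = (24::real)"
      by (simp add: fact_numeral)
    then show ?thesis
      unfolding abs_mult by (intro mult_mono) (auto simp: abs_divide)
  qed
  ultimately show ?thesis
    using t by simp
qed

lemma sin_ge_nine_tenths:
  fixes t :: real
  assumes "0 \<le> t" "t \<le> 1/2"
  shows "9/10 * t \<le> sin t"
proof -
  have "\<bar>t\<bar>^3 = t * t^2"
    using assms by (simp add: power2_eq_square power3_eq_cube)
  also have "\<dots> \<le> t * (1/2)^2"
    using assms by (intro mult_left_mono power_mono) auto
  finally have "\<bar>sin t - t\<bar> \<le> t / 24"
    using abs_sin_sub_le[of t] by (simp add: power2_eq_square)
  then show ?thesis
    using assms by linarith
qed

lemma sin_pos_small: "0 < t \<Longrightarrow> t \<le> 1 \<Longrightarrow> 0 < sin t" for t :: real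
  using sin_gt_zero[of t] pi_gt3 by linarith

lemma sin_nonneg_small: "0 \<le> t \<Longrightarrow> t \<le> 1 \<Longrightarrow> 0 \<le> sin t" for t :: real
  using sin_ge_zero[of t] pi_gt3 by linarith

lemma sin_mono_small: "0 \<le> s \<Longrightarrow> s \<le> t \<Longrightarrow> t \<le> 1 \<Longrightarrow> sin s \<le> sin t" for t :: real
  using sin_monotone_2pi_le[of s t] pi_gt3 by linarith

lemma tendsto_id_div_sin: "((\<lambda>x. x / sin x) \<longlongrightarrow> 1) (at (0::real))"
proof -
  have "((\<lambda>x. sin x / x) \<longlongrightarrow> 1) (at (0::real))"
    using DERIV_sin[of 0] by (simp add: has_field_derivative_iff)
  from tendsto_inverse[OF this] show ?thesis
    by simp
qed

lemma abs_one_sub_cos_div_sin_le: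
  fixes t :: real
  assumes "0 < t" "t \<le> 1/2"
  shows "\<bar>(1 - cos t) / sin t - t / 2\<bar> \<le> t^3 / 4"
proof -
  have sin_ge: "9/10 * t \<le> sin t"
    using sin_ge_nine_tenths assms by auto
  then have sin_pos: "0 < sin t"
    using assms by linarith
  have "2 * (1 - cos t) - t^2 = -2 * (cos t - (1 - t^2 / 2))"
    by (simp add: algebra_simps)
  then have "\<bar>2 * (1 - cos t) - t^2\<bar> \<le> t^4 / 12"
    using abs_cos_sub_le[of t] by (simp only: abs_mult) simp
  moreover have "\<bar>t * sin t - t^2\<bar> \<le> t^4 / 6"
  proof -
    have "t * sin t - t^2 = t * (sin t - t)"
      by (simp add: power2_eq_square right_diff_distrib)
    then have "\<bar>t * sin t - t^2\<bar> = t * \<bar>sin t - t\<bar>"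
      using assms by (simp add: abs_mult)
    also have "\<dots> \<le> t * (t^3 / 6)"
      using abs_sin_sub_le[of t] assms by (intro mult_left_mono) auto
    finally show ?thesis
      by (simp add: power_def)
  qed
  moreover have "2 * (1 - cos t) - t * sin t = (2 * (1 - cos t) - t^2) - (t * sin t - t^2)"
    by simp
  ultimately have num: "\<bar>2 * (1 - cos t) - t * sin t\<bar> \<le> t^4 / 4"
    using abs_triangle_ineq4[of "2 * (1 - cos t) - t^2" "t * sin t - t^2"] by linarith
  have "\<bar>(1 - cos t) / sin t - t / 2\<bar> = \<bar>2 * (1 - cos t) - t * sin t\<bar> / (2 * sin t)"
    using sin_pos by (simp add: field_simps abs_divide)
  also have "\<dots> \<le> (t^4 / 4) / (2 * (9/10 * t))"
    using num sin_ge assms by (intro frac_le) auto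
  also have "\<dots> \<le> t^3 / 4"
    using assms by (simp add: power_def field_simps)
  finally show ?thesis .
qed

section \<open>The nonlinearities of the equation\<close>

(* For q = u' the Euler-Lagrange equation reads (sin t * EL_flux q)' = sin t * EL_source q. *)
definition EL_flux :: "real \<Rightarrow> real" where
  "EL_flux x = x / (1 + x^2)^2"

definition EL_source :: "real \<Rightarrow> real" where
  "EL_source x = (x^2 - 1) / (1 + x^2)^2"

definition EL_flux' :: "real \<Rightarrow> real" where
  "EL_flux' x = (1 - 3 * x^2) / (1 + x^2)^3"

definition EL_source' :: "real \<Rightarrow> real" where
  "EL_source' x = (6 * x - 2 * x^3) / (1 + x^2)^3"

lemma one_plus_square_pos: "0 < 1 + x^2" for x :: real
  by (simp add: add_pos_nonneg)

lemma EL_flux_has_derivative: "(EL_flux has_real_derivative EL_flux' x) (at x)"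
proof -
  have "((\<lambda>x. x / (1 + x^2)^2) has_real_derivative
      (1 * (1 + x^2)^2 - x * (2 * (1 + x^2) * (2 * x))) / ((1 + x^2)^2)^2) (at x)"
    using one_plus_square_pos[of x] by (auto intro!: derivative_eq_intros simp: power2_eq_square)
  moreover have "(1 * (1 + x^2)^2 - x * (2 * (1 + x^2) * (2 * x))) / ((1 + x^2)^2)^2 = EL_flux' x"
    using one_plus_square_pos[of x] unfolding EL_flux'_def by (simp add: divide_simps) algebra
  ultimately show ?thesis
    unfolding EL_flux_def[abs_def] by simp
qed

lemma EL_source_has_derivative: "(EL_source has_real_derivative EL_source' x) (at x)"
proof -
  have "((\<lambda>x. (x^2 - 1) / (1 + x^2)^2) has_real_derivative
      ((2 * x) * (1 + x^2)^2 - (x^2 - 1) * (2 * (1 + x^2) * (2 * x))) / ((1 + x^2)^2)^2) (at x)"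
    using one_plus_square_pos[of x] by (auto intro!: derivative_eq_intros simp: power2_eq_square)
  moreover have "((2 * x) * (1 + x^2)^2 - (x^2 - 1) * (2 * (1 + x^2) * (2 * x))) / ((1 + x^2)^2)^2
      = EL_source' x"
    using one_plus_square_pos[of x] unfolding EL_source'_def by (simp add: divide_simps) algebra
  ultimately show ?thesis
    unfolding EL_source_def[abs_def] by simp
qed

lemma continuous_on_EL_flux [continuous_intros]:
  "continuous_on S f \<Longrightarrow> continuous_on S (\<lambda>x. EL_flux (f x))"
  unfolding EL_flux_def using one_plus_square_pos
  by (intro continuous_intros) (auto simp: less_le)

lemma continuous_on_EL_source [continuous_intros]:
  "continuous_on S f \<Longrightarrow> continuous_on S (\<lambda>x. EL_source (f x))"
  unfolding EL_source_def using one_plus_square_pos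
  by (intro continuous_intros) (auto simp: less_le)

lemma continuous_on_EL_flux' [continuous_intros]:
  "continuous_on S f \<Longrightarrow> continuous_on S (\<lambda>x. EL_flux' (f x))"
  unfolding EL_flux'_def using one_plus_square_pos
  by (intro continuous_intros) (auto simp: less_le)

lemma tendsto_EL_source [tendsto_intros]:
  "(f \<longlongrightarrow> a) F \<Longrightarrow> ((\<lambda>x. EL_source (f x)) \<longlongrightarrow> EL_source a) F"
  unfolding EL_source_def using one_plus_square_pos
  by (intro tendsto_intros) (auto simp: less_le)

lemma tendsto_EL_flux' [tendsto_intros]:
  "(f \<longlongrightarrow> a) F \<Longrightarrow> ((\<lambda>x. EL_flux' (f x)) \<longlongrightarrow> EL_flux' a) F"
  unfolding EL_flux'_def using one_plus_square_pos
  by (intro tendsto_intros) (auto simp: less_le)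

lemma EL_flux'_bounds:
  assumes "\<bar>x\<bar> \<le> 1/5"
  shows "3/4 \<le> EL_flux' x" "EL_flux' x \<le> 1"
proof -
  have x2: "x^2 \<le> 1/25"
    using power_mono[OF assms abs_ge_zero, of 2] by (simp add: power2_eq_square)
  have pos: "0 < (1 + x^2)^3"
    using one_plus_square_pos[of x] by simp
  have "(1 + x^2)^3 \<le> (26/25)^3"
    using x2 by (intro power_mono) auto
  then have "3/4 * (1 + x^2)^3 \<le> 1 - 3 * x^2"
    using x2 by (simp add: power3_eq_cube)
  then show "3/4 \<le> EL_flux' x"
    unfolding EL_flux'_def using pos by (simp add: le_divide_eq)
  have "1 \<le> (1 + x^2)^3"
    by (simp add: one_le_power)
  then have "1 - 3 * x^2 \<le> (1 + x^2)^3"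
    using zero_le_power2[of x] by linarith
  then show "EL_flux' x \<le> 1"
    unfolding EL_flux'_def using pos by (simp add: divide_le_eq)
qed

lemma abs_EL_source'_le:
  assumes "\<bar>x\<bar> \<le> 1/5"
  shows "\<bar>EL_source' x\<bar> \<le> 2"
proof -
  have "\<bar>6 * x - 2 * x^3\<bar> \<le> 6 * \<bar>x\<bar> + 2 * (\<bar>x\<bar> * \<bar>x\<bar>^2)"
    using abs_triangle_ineq4[of "6 * x" "2 * x^3"] by (simp add: abs_mult power3_eq_cube power2_eq_square)
  also have "\<dots> \<le> 6 * (1/5) + 2 * ((1/5) * (1/5)^2)"
    using assms by (intro add_mono mult_left_mono mult_mono power_mono) auto
  finally have "\<bar>6 * x - 2 * x^3\<bar> \<le> 2"
    by (simp add: power2_eq_square)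
  moreover have "\<bar>EL_source' x\<bar> \<le> \<bar>6 * x - 2 * x^3\<bar>"
    unfolding EL_source'_def by (rule abs_div_le_abs) (simp add: one_le_power)
  ultimately show ?thesis
    by linarith
qed

lemma abs_sub_EL_flux_le:
  assumes "\<bar>x\<bar> \<le> 1"
  shows "\<bar>x - EL_flux x\<bar> \<le> 3 * \<bar>x\<bar>^3"
proof -
  have "x - EL_flux x = x * (2 * x^2 + x^4) / (1 + x^2)^2"
    unfolding EL_flux_def using one_plus_square_pos[of x] by (simp add: divide_simps) algebra
  then have "\<bar>x - EL_flux x\<bar> \<le> \<bar>x\<bar> * (2 * x^2 + x^4)"
    using abs_div_le_abs[of "(1 + x^2)^2" "x * (2 * x^2 + x^4)"]
    by (simp add: one_le_power abs_mult)
  also have "\<dots> \<le> \<bar>x\<bar> * (3 * x^2)"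
  proof -
    have "x^2 \<le> 1"
      using power_mono[OF assms abs_ge_zero, of 2] by simp
    then have "x^2 * x^2 \<le> 1 * x^2"
      by (intro mult_right_mono) auto
    moreover have "x^4 = x^2 * x^2"
      by algebra
    ultimately have "x^4 \<le> x^2"
      by (simp only: mult_1_left)
    then show ?thesis
      by (intro mult_left_mono) auto
  qed
  also have "\<dots> = 3 * \<bar>x\<bar>^3"
    by (simp add: power2_eq_square power3_eq_cube abs_mult_self_eq)
  finally show ?thesis .
qed

lemma abs_EL_source_add_one_le: "\<bar>EL_source x + 1\<bar> \<le> 3 * x^2"
proof -
  have pos: "0 < (1 + x^2)^2"
    using one_plus_square_pos[of x] by simp
  have "EL_source x + 1 = (3 * x^2 + x^4) / (1 + x^2)^2"
    unfolding EL_source_def using pos by (simp add: divide_simps) algebra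
  moreover have "3 * x^2 * (1 + x^2)^2 - (3 * x^2 + x^4) = 5 * (x^2)^2 + 3 * (x^3)^2"
    by algebra
  then have "3 * x^2 + x^4 \<le> 3 * x^2 * (1 + x^2)^2"
    using zero_le_power2[of "x^2"] zero_le_power2[of "x^3"] by linarith
  ultimately show ?thesis
    using pos by (simp add: divide_le_eq)
qed

lemma abs_EL_source_le_one: "\<bar>EL_source x\<bar> \<le> 1"
proof -
  have "(1 + x^2)^2 = 1 + 2 * x^2 + (x^2)^2"
    by algebra
  then have "\<bar>x^2 - 1\<bar> \<le> (1 + x^2)^2"
    using zero_le_power2[of x] zero_le_power2[of "x^2"] by linarith
  then show ?thesis
    unfolding EL_source_def using one_plus_square_pos[of x] by (simp add: abs_divide divide_le_eq)
qed

lemma EL_flux_nonpos_bounds: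
  assumes "x \<le> 0"
  shows "x \<le> EL_flux x" "EL_flux x \<le> 0"
proof -
  have "1 \<le> (1 + x^2)^2"
    by (simp add: one_le_power)
  then have "x * (1 + x^2)^2 \<le> x * 1"
    using assms by (intro mult_left_mono_neg) auto
  then show "x \<le> EL_flux x"
    unfolding EL_flux_def using one_plus_square_pos[of x] by (simp add: le_divide_eq)
  show "EL_flux x \<le> 0"
    unfolding EL_flux_def using assms one_plus_square_pos[of x] by (simp add: divide_nonpos_pos)
qed

lemma sub_EL_flux_lipschitz:
  assumes "\<bar>x\<bar> \<le> 1/5" "\<bar>y\<bar> \<le> 1/5"
  shows "\<bar>(x - EL_flux x) - (y - EL_flux y)\<bar> \<le> 1/4 * \<bar>x - y\<bar>"
proof -
  have "norm ((x - EL_flux x) - (y - EL_flux y)) \<le> 1/4 * norm (x - y)"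
  proof (rule field_differentiable_bound[where S = "{-1/5..1/5}"])
    show "((\<lambda>z. z - EL_flux z) has_field_derivative 1 - EL_flux' z) (at z within {-1/5..1/5})" for z
      by (intro derivative_intros has_field_derivative_at_within[OF EL_flux_has_derivative])
    show "norm (1 - EL_flux' z) \<le> 1/4" if "z \<in> {-1/5..1/5}" for z
      using EL_flux'_bounds[of z] that by auto
  qed (use assms in auto)
  then show ?thesis
    by simp
qed

lemma EL_source_lipschitz:
  assumes "\<bar>x\<bar> \<le> 1/5" "\<bar>y\<bar> \<le> 1/5"
  shows "\<bar>EL_source x - EL_source y\<bar> \<le> 2 * \<bar>x - y\<bar>"
proof -
  have "norm (EL_source x - EL_source y) \<le> 2 * norm (x - y)"
  proof (rule field_differentiable_bound[where S = "{-1/5..1/5}"])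
    show "(EL_source has_field_derivative EL_source' z) (at z within {-1/5..1/5})" for z
      by (rule has_field_derivative_at_within[OF EL_source_has_derivative])
    show "norm (EL_source' z) \<le> 2" if "z \<in> {-1/5..1/5}" for z
      using abs_EL_source'_le[of z] that by auto
  qed (use assms in auto)
  then show ?thesis
    by simp
qed

lemma EL_flux_inverse_lipschitz:
  assumes "\<bar>x\<bar> \<le> 1/5" "\<bar>y\<bar> \<le> 1/5"
  shows "3/4 * \<bar>x - y\<bar> \<le> \<bar>EL_flux x - EL_flux y\<bar>"
proof -
  have "x - y = (EL_flux x - EL_flux y) + ((x - EL_flux x) - (y - EL_flux y))"
    by simp
  then have "\<bar>x - y\<bar> \<le> \<bar>EL_flux x - EL_flux y\<bar> + \<bar>(x - EL_flux x) - (y - EL_flux y)\<bar>"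
    by (metis abs_triangle_ineq)
  then show ?thesis
    using sub_EL_flux_lipschitz[OF assms] by argo
qed

section \<open>The integrated equation as a fixed-point problem\<close>

definition EL_integral :: "(real \<Rightarrow> real) \<Rightarrow> real \<Rightarrow> real" where
  "EL_integral q t = integral {0..t} (\<lambda>s. sin s * EL_source (q s))"

(* Fixed points solve sin t * EL_flux (q t) = EL_integral q t; subtracting EL_flux from the
   identity makes the map contracting, as EL_flux' 0 = 1. *)
definition EL_relax :: "(real \<Rightarrow> real) \<Rightarrow> real \<Rightarrow> real" where
  "EL_relax q t = q t - EL_flux (q t) + EL_integral q t / sin t"

(* q t = - t/2 + O(t^3), the expansion forced by u''(0) = -1/2; on the band |q| <= 1/5, where
   the Lipschitz bounds for EL_flux and EL_source hold. *)
definition EL_band :: "(real \<Rightarrow> real) \<Rightarrow> bool" where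
  "EL_band q \<longleftrightarrow> (\<forall>s\<in>{0..1/10}. \<bar>q s + s / 2\<bar> \<le> 20 * s^3)"

lemma EL_band_bounds:
  assumes "EL_band q" "s \<in> {0..1/10}"
  shows "- (7/10) * s \<le> q s" "q s \<le> - (3/10) * s"
proof -
  have "s^2 \<le> (1/10)^2"
    using assms(2) by (intro power_mono) auto
  then have "s * s^2 \<le> s * (1/10)^2"
    using assms(2) by (intro mult_left_mono) auto
  then have "20 * s^3 \<le> s / 5"
    by (simp add: power2_eq_square power3_eq_cube)
  moreover have "\<bar>q s + s / 2\<bar> \<le> 20 * s^3"
    using assms unfolding EL_band_def by blast
  ultimately show "- (7/10) * s \<le> q s" "q s \<le> - (3/10) * s"
    unfolding abs_le_iff by linarith+
qed

lemma EL_band_abs_le: "EL_band q \<Longrightarrow> s \<in> {0..1/10} \<Longrightarrow> \<bar>q s\<bar> \<le> 7/10 * s"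
  using EL_band_bounds[of q s] by auto

lemma EL_band_zero: "EL_band q \<Longrightarrow> q 0 = 0"
  using EL_band_bounds[of q 0] by simp

lemma EL_integral_has_derivative:
  assumes "continuous_on {0..1/10} q" "t \<in> {0..1/10}"
  shows "(EL_integral q has_real_derivative sin t * EL_source (q t)) (at t within {0..1/10})"
  unfolding EL_integral_def[abs_def] by (intro integral_has_real_derivative continuous_intros assms)

lemma abs_EL_integral_le:
  assumes "continuous_on {0..1/10} q" "t \<in> {0..1/10}"
  shows "\<bar>EL_integral q t\<bar> \<le> sin t * t"
proof -
  have "norm (integral {0..t} (\<lambda>s. sin s * EL_source (q s))) \<le> sin t * (t - 0)"
  proof (rule integral_bound)
    show "continuous_on {0..t} (\<lambda>s. sin s * EL_source (q s))"
      using assms by (intro continuous_intros continuous_on_subset[OF assms(1)]) auto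
    fix s assume s: "s \<in> {0..t}"
    then have "\<bar>sin s\<bar> \<le> sin t"
      using assms(2) sin_nonneg_small[of s] sin_mono_small[of s t] by auto
    then have "\<bar>sin s\<bar> * \<bar>EL_source (q s)\<bar> \<le> sin t * 1"
      using abs_EL_source_le_one by (intro mult_mono) auto
    then show "norm (sin s * EL_source (q s)) \<le> sin t"
      by (simp add: abs_mult)
  qed (use assms in auto)
  then show ?thesis
    by (simp add: EL_integral_def)
qed

lemma abs_EL_integral_add_le:
  assumes "continuous_on {0..1/10} q" "EL_band q" "t \<in> {0..1/10}"
  shows "\<bar>EL_integral q t + (1 - cos t)\<bar> \<le> 3 * t^4"
proof -
  have cont: "continuous_on {0..t} (\<lambda>s. sin s * EL_source (q s))"
    using assms by (intro continuous_intros continuous_on_subset[OF assms(1)]) auto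
  have "EL_integral q t + (1 - cos t) = integral {0..t} (\<lambda>s. sin s * EL_source (q s) + sin s)"
    using assms(3) integral_add[OF integrable_continuous_real[OF cont], of sin]
    by (simp add: EL_integral_def integrable_continuous_real continuous_on_sin continuous_on_id)
  also have "\<dots> = integral {0..t} (\<lambda>s. sin s * (EL_source (q s) + 1))"
    by (simp add: distrib_left)
  also have "\<bar>\<dots>\<bar> \<le> (t * (3 * t^2)) * (t - 0)"
    unfolding real_norm_def[symmetric]
  proof (rule integral_bound)
    show "continuous_on {0..t} (\<lambda>s. sin s * (EL_source (q s) + 1))"
      using assms by (intro continuous_intros continuous_on_subset[OF assms(1)]) auto
    fix s assume s: "s \<in> {0..t}"
    then have "\<bar>sin s\<bar> \<le> t"
      using assms(3) sin_nonneg_small[of s] sin_x_le_x[of s] by auto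
    moreover have "\<bar>q s\<bar> \<le> t"
      using EL_band_abs_le[OF assms(2), of s] s assms(3) by auto
    then have "\<bar>EL_source (q s) + 1\<bar> \<le> 3 * t^2"
      using abs_EL_source_add_one_le[of "q s"] power_mono[of "\<bar>q s\<bar>" t 2] by auto
    ultimately show "norm (sin s * (EL_source (q s) + 1)) \<le> t * (3 * t^2)"
      unfolding real_norm_def abs_mult by (intro mult_mono) auto
  qed (use assms in auto)
  finally show ?thesis
    by (simp add: power_def algebra_simps)
qed

lemma EL_relax_band:
  assumes "continuous_on {0..1/10} q" "EL_band q" "t \<in> {0..1/10}"
  shows "\<bar>EL_relax q t + t / 2\<bar> \<le> 20 * t^3"
proof (cases "t = 0")
  case True
  then show ?thesis
    using EL_band_zero[OF assms(2)] by (simp add: EL_relax_def EL_flux_def EL_integral_def)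
next
  case False
  then have t: "0 < t" "t \<le> 1/10"
    using assms(3) by auto
  have sin_ge: "9/10 * t \<le> sin t"
    using sin_ge_nine_tenths t by auto
  then have sin_pos: "0 < sin t"
    using t by linarith
  have split: "EL_relax q t + t / 2 = (q t - EL_flux (q t))
      + (EL_integral q t + (1 - cos t)) / sin t - ((1 - cos t) / sin t - t / 2)"
    unfolding EL_relax_def using sin_pos by (simp add: field_simps)
  have "\<bar>q t\<bar> \<le> t"
    using EL_band_abs_le[OF assms(2,3)] t by linarith
  then have "\<bar>q t\<bar>^3 \<le> t^3"
    by (intro power_mono) auto
  then have "\<bar>q t - EL_flux (q t)\<bar> \<le> 3 * t^3"
    using abs_sub_EL_flux_le[of "q t"] \<open>\<bar>q t\<bar> \<le> t\<close> t by linarith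
  moreover have "\<bar>(EL_integral q t + (1 - cos t)) / sin t\<bar> \<le> 10/3 * t^3"
  proof -
    have "\<bar>(EL_integral q t + (1 - cos t)) / sin t\<bar> \<le> (3 * t^4) / (9/10 * t)"
      unfolding abs_divide using abs_EL_integral_add_le[OF assms] sin_pos sin_ge t
      by (intro frac_le) auto
    also have "\<dots> = 10/3 * t^3"
      using t by (simp add: power_def field_simps)
    finally show ?thesis .
  qed
  moreover have "\<bar>(1 - cos t) / sin t - t / 2\<bar> \<le> t^3 / 4"
    using abs_one_sub_cos_div_sin_le t by auto
  moreover have "0 \<le> t^3"
    using t by simp
  ultimately show ?thesis
    unfolding split
    using abs_triangle_ineq[of "q t - EL_flux (q t)" "(EL_integral q t + (1 - cos t)) / sin t"]
      abs_triangle_ineq4[of "(q t - EL_flux (q t)) + (EL_integral q t + (1 - cos t)) / sin t"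
        "(1 - cos t) / sin t - t / 2"]
    by linarith
qed

lemma continuous_on_EL_integral_div_sin:
  assumes "continuous_on {0..1/10} q"
  shows "continuous_on {0..1/10} (\<lambda>t. EL_integral q t / sin t)"
  unfolding continuous_on_eq_continuous_within
proof
  fix t :: real assume t: "t \<in> {0..1/10}"
  show "continuous (at t within {0..1/10}) (\<lambda>t. EL_integral q t / sin t)"
  proof (cases "t = 0")
    case True
    have bound: "norm (EL_integral q x / sin x) \<le> x" if "x \<in> {0..1/10}" for x
    proof (cases "x = 0")
      case False
      then have "0 < sin x"
        using that sin_pos_small by auto
      then show ?thesis
        using abs_EL_integral_le[OF assms that] by (simp add: abs_divide divide_le_eq mult.commute)
    qed simp
    have "((\<lambda>t. EL_integral q t / sin t) \<longlongrightarrow> 0) (at 0 within {0..1/10})"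
    proof (rule Lim_null_comparison)
      show "\<forall>\<^sub>F x in at 0 within {0..1/10}. norm (EL_integral q x / sin x) \<le> x"
        unfolding eventually_at_filter by (rule always_eventually) (use bound in blast)
    qed (rule tendsto_ident_at)
    then show ?thesis
      using True by (simp add: continuous_within EL_integral_def)
  next
    case False
    then have "sin t \<noteq> 0"
      using t sin_pos_small[of t] by auto
    moreover have "continuous (at t within {0..1/10}) (EL_integral q)"
      using EL_integral_has_derivative[OF assms t] by (rule DERIV_continuous)
    ultimately show ?thesis
      by (intro continuous_divide continuous_intros) auto
  qed
qed

lemma continuous_on_EL_relax:
  assumes "continuous_on {0..1/10} q"
  shows "continuous_on {0..1/10} (EL_relax q)"
proof -
  have "continuous_on {0..1/10} (\<lambda>t. q t - EL_flux (q t))"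
    using assms by (intro continuous_intros)
  from continuous_on_add[OF this continuous_on_EL_integral_div_sin[OF assms]]
  show ?thesis
    unfolding EL_relax_def[abs_def] .
qed

lemma abs_EL_integral_diff_le:
  assumes "continuous_on {0..1/10} q1" "continuous_on {0..1/10} q2"
    and "EL_band q1" "EL_band q2"
    and "\<And>s. s \<in> {0..1/10} \<Longrightarrow> \<bar>q1 s - q2 s\<bar> \<le> D"
    and "t \<in> {0..1/10}"
  shows "\<bar>EL_integral q1 t - EL_integral q2 t\<bar> \<le> sin t * (2 * D) * t"
proof -
  have cont: "continuous_on {0..t} (\<lambda>s. sin s * EL_source (q s))"
    if "continuous_on {0..1/10} q" for q
    using assms(6) by (intro continuous_intros continuous_on_subset[OF that]) auto
  have "EL_integral q1 t - EL_integral q2 t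
      = integral {0..t} (\<lambda>s. sin s * EL_source (q1 s) - sin s * EL_source (q2 s))"
    unfolding EL_integral_def
    by (rule integral_diff[symmetric]) (intro integrable_continuous_real cont assms)+
  also have "\<bar>\<dots>\<bar> \<le> sin t * (2 * D) * (t - 0)"
    unfolding real_norm_def[symmetric]
  proof (rule integral_bound)
    show "continuous_on {0..t} (\<lambda>s. sin s * EL_source (q1 s) - sin s * EL_source (q2 s))"
      using cont assms(1,2) by (intro continuous_on_diff)
    fix s assume s: "s \<in> {0..t}"
    then have s': "s \<in> {0..1/10}"
      using assms(6) by auto
    have "\<bar>sin s\<bar> \<le> sin t"
      using s assms(6) sin_nonneg_small[of s] sin_mono_small[of s t] by auto
    moreover have "\<bar>EL_source (q1 s) - EL_source (q2 s)\<bar> \<le> 2 * D"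
      using EL_source_lipschitz[of "q1 s" "q2 s"] EL_band_abs_le[OF assms(3) s']
        EL_band_abs_le[OF assms(4) s'] assms(5)[OF s'] s' by auto
    ultimately show "norm (sin s * EL_source (q1 s) - sin s * EL_source (q2 s)) \<le> sin t * (2 * D)"
      unfolding real_norm_def right_diff_distrib[symmetric] abs_mult by (intro mult_mono) auto
  qed (use assms in auto)
  finally show ?thesis
    by simp
qed

lemma EL_relax_contraction:
  assumes "continuous_on {0..1/10} q1" "continuous_on {0..1/10} q2"
    and "EL_band q1" "EL_band q2"
    and D: "\<And>s. s \<in> {0..1/10} \<Longrightarrow> \<bar>q1 s - q2 s\<bar> \<le> D"
    and t: "t \<in> {0..1/10}"
  shows "\<bar>EL_relax q1 t - EL_relax q2 t\<bar> \<le> D / 2"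
proof -
  have "\<bar>(q1 t - EL_flux (q1 t)) - (q2 t - EL_flux (q2 t))\<bar> \<le> 1/4 * \<bar>q1 t - q2 t\<bar>"
    using EL_band_abs_le[OF assms(3) t] EL_band_abs_le[OF assms(4) t] t
    by (intro sub_EL_flux_lipschitz) auto
  then have flux_part: "\<bar>(q1 t - EL_flux (q1 t)) - (q2 t - EL_flux (q2 t))\<bar> \<le> 1/4 * D"
    using D[OF t] by argo
  have integral_part: "\<bar>(EL_integral q1 t - EL_integral q2 t) / sin t\<bar> \<le> 1/5 * D"
  proof (cases "t = 0")
    case True
    then show ?thesis
      using D[of 0] by (simp add: EL_integral_def)
  next
    case False
    then have "0 < sin t"
      using t sin_pos_small by auto
    then have "\<bar>(EL_integral q1 t - EL_integral q2 t) / sin t\<bar> \<le> 2 * D * t"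
      using abs_EL_integral_diff_le[OF assms] by (simp add: abs_divide divide_le_eq mult_ac)
    also have "\<dots> \<le> 2 * D * (1/10)"
      using t D[OF t] by (intro mult_left_mono) auto
    finally show ?thesis
      by simp
  qed
  have "EL_relax q1 t - EL_relax q2 t = ((q1 t - EL_flux (q1 t)) - (q2 t - EL_flux (q2 t)))
      + (EL_integral q1 t - EL_integral q2 t) / sin t"
    unfolding EL_relax_def by (simp add: diff_divide_distrib)
  then show ?thesis
    using flux_part integral_part
      abs_triangle_ineq[of "(q1 t - EL_flux (q1 t)) - (q2 t - EL_flux (q2 t))"
        "(EL_integral q1 t - EL_integral q2 t) / sin t"]
    by linarith
qed

definition EL_band_set :: "(real \<Rightarrow>\<^sub>C real) set" where
  "EL_band_set = PiC {0..1/10} (\<lambda>s. {- s / 2 - 20 * s^3 .. - s / 2 + 20 * s^3})"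

lemma mem_EL_band_set_iff: "P \<in> EL_band_set \<longleftrightarrow> EL_band (apply_bcontfun P)"
  unfolding EL_band_set_def EL_band_def mem_PiC_iff Pi_iff abs_le_iff by auto

lemma complete_EL_band_set: "complete EL_band_set"
  unfolding EL_band_set_def complete_eq_closed by (intro closed_PiC) auto

lemma clamp_tenth: "clamp 0 (1/10) t \<in> {0..1/10::real}"
  using clamp_in_interval[of 0 "1/10" t] by simp

lemma clamp_tenth_id: "t \<in> {0..1/10::real} \<Longrightarrow> clamp 0 (1/10) t = t"
  by (simp add: clamp_cancel_cbox)

lemma EL_band_set_nonempty: "EL_band_set \<noteq> {}"
proof -
  have "continuous_on (cbox 0 (1/10)) (\<lambda>t::real. - t / 2)"
    by (intro continuous_intros) auto
  then obtain g :: "real \<Rightarrow>\<^sub>C real" where "\<And>t. t \<in> cbox 0 (1/10) \<Longrightarrow> g t = - t / 2"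
    using continuous_on_cbox_bcontfunE by blast
  then have "g \<in> EL_band_set"
    by (simp add: mem_EL_band_set_iff EL_band_def)
  then show ?thesis
    by blast
qed

(* Clamping extends EL_relax P constantly beyond [0, 1/10], so that the contraction lives on the
   complete space of bounded continuous functions on the real line. *)
definition EL_relax_bcontfun :: "(real \<Rightarrow>\<^sub>C real) \<Rightarrow> real \<Rightarrow>\<^sub>C real" where
  "EL_relax_bcontfun P = Bcontfun (\<lambda>t. EL_relax P (clamp 0 (1/10) t))"

lemma apply_EL_relax_bcontfun:
  "apply_bcontfun (EL_relax_bcontfun P) t = EL_relax P (clamp 0 (1/10) t)"
proof -
  have "continuous_on (cbox 0 (1/10)) (EL_relax P)"
    using continuous_on_EL_relax[of "apply_bcontfun P"] by simp
  then obtain g :: "real \<Rightarrow>\<^sub>C real" where "\<And>t. g t = EL_relax P (clamp 0 (1/10) t)"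
    using continuous_on_cbox_bcontfunE by blast
  then have "(\<lambda>t. EL_relax P (clamp 0 (1/10) t)) \<in> bcontfun"
    by (metis apply_bcontfun ext)
  then show ?thesis
    unfolding EL_relax_bcontfun_def by (simp add: Bcontfun_inverse)
qed

lemma EL_relax_bcontfun_mem: "P \<in> EL_band_set \<Longrightarrow> EL_relax_bcontfun P \<in> EL_band_set"
  unfolding mem_EL_band_set_iff
  using EL_relax_band[of "apply_bcontfun P"]
  by (simp add: EL_band_def apply_EL_relax_bcontfun clamp_tenth_id)

lemma EL_relax_bcontfun_contraction:
  assumes "P \<in> EL_band_set" "Q \<in> EL_band_set"
  shows "dist (EL_relax_bcontfun P) (EL_relax_bcontfun Q) \<le> 1/2 * dist P Q"
proof (rule dist_bound)
  fix t
  have "\<bar>EL_relax P (clamp 0 (1/10) t) - EL_relax Q (clamp 0 (1/10) t)\<bar> \<le> dist P Q / 2"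
  proof (rule EL_relax_contraction)
    show "\<bar>P s - Q s\<bar> \<le> dist P Q" for s
      using dist_bounded[of P s Q] by (simp add: dist_real_def)
  qed (use assms clamp_tenth in \<open>auto simp: mem_EL_band_set_iff\<close>)
  then show "dist (EL_relax_bcontfun P t) (EL_relax_bcontfun Q t) \<le> 1/2 * dist P Q"
    by (simp add: apply_EL_relax_bcontfun dist_real_def)
qed

(* p will be the derivative u' of the solution. *)
locale integrated_EL_solution =
  fixes p :: "real \<Rightarrow> real"
  assumes continuous: "continuous_on {0..1/10} p"
    and band: "EL_band p"
    and integrated: "\<And>t. t \<in> {0..1/10} \<Longrightarrow> sin t * EL_flux (p t) = EL_integral p t"

lemma integrated_EL_solution_exists: "\<exists>p. integrated_EL_solution p"
proof -
  obtain P where P: "P \<in> EL_band_set" "EL_relax_bcontfun P = P"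
    using Banach_fix[OF complete_EL_band_set EL_band_set_nonempty, of "1/2" EL_relax_bcontfun]
      EL_relax_bcontfun_mem EL_relax_bcontfun_contraction by auto
  have "sin t * EL_flux (P t) = EL_integral P t" if t: "t \<in> {0..1/10}" for t
  proof (cases "t = 0")
    case True
    then show ?thesis
      using P(1) EL_band_zero by (simp add: mem_EL_band_set_iff EL_flux_def EL_integral_def)
  next
    case False
    then have "sin t \<noteq> 0"
      using t sin_pos_small[of t] by auto
    moreover have "EL_relax P t = P t"
      using apply_EL_relax_bcontfun[of P t] P(2) clamp_tenth_id[OF t] by simp
    ultimately show ?thesis
      unfolding EL_relax_def by (simp add: field_simps)
  qed
  then have "integrated_EL_solution (apply_bcontfun P)"
    using P(1) by unfold_locales (auto simp: mem_EL_band_set_iff)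
  then show ?thesis
    by blast
qed

section \<open>Regularity of the fixed point\<close>

(* q' obtained by differentiating sin t * EL_flux (q t) = EL_integral q t; at the pole, where
   the formula degenerates, it is replaced by its limit. *)
definition EL_u2 :: "(real \<Rightarrow> real) \<Rightarrow> real \<Rightarrow> real" where
  "EL_u2 q t = (if t = 0 then - 1/2
     else (EL_source (q t) - cos t / sin t * EL_flux (q t)) / EL_flux' (q t))"

definition EL_primitive :: "real \<Rightarrow> (real \<Rightarrow> real) \<Rightarrow> real \<Rightarrow> real" where
  "EL_primitive u0 q t = u0 + integral {0..t} q"

context integrated_EL_solution
begin

lemma abs_le_fifth: "t \<in> {0..1/10} \<Longrightarrow> \<bar>p t\<bar> \<le> 1/5"
  using EL_band_abs_le[OF band, of t] by auto

lemma EL_flux_equation: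
  assumes "\<theta> \<in> {0<..<1/10}"
  shows "((\<lambda>t. sin t * EL_flux (p t)) has_real_derivative sin \<theta> * EL_source (p \<theta>)) (at \<theta>)"
proof -
  have "(EL_integral p has_real_derivative sin \<theta> * EL_source (p \<theta>)) (at \<theta>)"
    using EL_integral_has_derivative[OF continuous, of \<theta>] assms by (simp add: at_within_Icc_at)
  then show ?thesis
    by (rule has_field_derivative_transform_within_open[OF _ open_greaterThanLessThan assms])
      (simp add: integrated)
qed

lemma has_derivative_EL_u2:
  assumes "0 < \<theta>" "\<theta> < 1/10"
  shows "(p has_real_derivative EL_u2 p \<theta>) (at \<theta>)"
proof -
  have sin_pos: "0 < sin \<theta>"
    using assms sin_pos_small by auto
  have "3/4 \<le> EL_flux' (p \<theta>)"
    using EL_flux'_bounds abs_le_fifth assms by auto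
  moreover have "isCont p \<theta>"
    using continuous_on_interior[OF continuous, of \<theta>] assms by simp
  moreover have "eventually (\<lambda>t. EL_flux (p t) = EL_integral p t / sin t) (nhds \<theta>)"
  proof -
    have "eventually (\<lambda>t. t \<in> {0<..<1/10}) (nhds \<theta>)"
      using assms by (intro eventually_nhds_in_open) auto
    then show ?thesis
    proof eventually_elim
      case (elim t)
      then have "sin t \<noteq> 0"
        using sin_pos_small[of t] by auto
      then show ?case
        using integrated[of t] elim by (simp add: field_simps)
    qed
  qed
  moreover have "((\<lambda>t. EL_integral p t / sin t) has_real_derivative
      (sin \<theta> * EL_source (p \<theta>) * sin \<theta> - EL_integral p \<theta> * cos \<theta>) / (sin \<theta> * sin \<theta>)) (at \<theta>)"
    using EL_integral_has_derivative[OF continuous, of \<theta>] assms sin_pos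
    by (intro DERIV_divide DERIV_sin) (auto simp: at_within_Icc_at)
  ultimately have "(p has_real_derivative
      ((sin \<theta> * EL_source (p \<theta>) * sin \<theta> - EL_integral p \<theta> * cos \<theta>) / (sin \<theta> * sin \<theta>))
        / EL_flux' (p \<theta>)) (at \<theta>)"
    by (intro has_real_derivative_implicit[OF EL_flux_has_derivative]) auto
  moreover have "(sin \<theta> * EL_source (p \<theta>) * sin \<theta> - EL_integral p \<theta> * cos \<theta>) / (sin \<theta> * sin \<theta>)
      = EL_source (p \<theta>) - cos \<theta> / sin \<theta> * EL_flux (p \<theta>)"
    using integrated[of \<theta>] assms sin_pos by (simp add: field_simps power2_eq_square)
  ultimately show ?thesis
    using assms by (simp add: EL_u2_def)
qed

lemma difference_quotient_tendsto_pole: "((\<lambda>y. p y / y) \<longlongrightarrow> - 1/2) (at 0 within {0..<1/10})"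
proof -
  have "((\<lambda>y. p y / y - (- 1/2)) \<longlongrightarrow> 0) (at 0 within {0..<1/10})"
  proof (rule Lim_null_comparison)
    have "norm (p y / y - (- 1/2)) \<le> 20 * y^2" if "y \<noteq> 0" "y \<in> {0..<1/10}" for y
    proof -
      have "p y / y - (- 1/2) = (p y + y / 2) / y"
        using that by (simp add: field_simps)
      moreover have "\<bar>p y + y / 2\<bar> \<le> 20 * y^3"
        using band that unfolding EL_band_def by auto
      ultimately show ?thesis
        using that by (simp add: abs_divide divide_le_eq power3_eq_cube power2_eq_square)
    qed
    then show "\<forall>\<^sub>F y in at 0 within {0..<1/10}. norm (p y / y - (- 1/2)) \<le> 20 * y^2"
      unfolding eventually_at_filter by (auto intro!: always_eventually)
    show "((\<lambda>y. 20 * y^2) \<longlongrightarrow> 0) (at 0 within {0..<1/10::real})"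
    proof -
      have "((\<lambda>y. 20 * y^2) \<longlongrightarrow> 20 * 0^2) (at 0 within {0..<1/10::real})"
        by (intro tendsto_mult tendsto_const tendsto_power tendsto_ident_at)
      then show ?thesis
        by simp
    qed
  qed
  then show ?thesis
    by (rule LIM_zero_cancel)
qed

lemma has_derivative_at_pole: "(p has_real_derivative - 1/2) (at 0 within {0..<1/10})"
  using difference_quotient_tendsto_pole EL_band_zero[OF band] by (simp add: has_field_derivative_iff)

lemma EL_u2_tendsto_pole: "(EL_u2 p \<longlongrightarrow> - 1/2) (at 0 within {0..<1/10})"
proof -
  let ?S = "{0..<1/10::real}"
  have "(p \<longlongrightarrow> p 0) (at 0 within {0..1/10})"
    using continuous by (simp add: continuous_on_def)
  then have "(p \<longlongrightarrow> p 0) (at 0 within ?S)"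
    by (rule tendsto_within_subset) auto
  then have lim_p: "(p \<longlongrightarrow> 0) (at 0 within ?S)"
    using EL_band_zero[OF band] by simp
  have lim_sin: "((\<lambda>y. y / sin y) \<longlongrightarrow> 1) (at 0 within ?S)"
    using tendsto_id_div_sin by (rule tendsto_within_subset) simp
  have "((\<lambda>y. (1 + (p y)^2)^2) \<longlongrightarrow> (1 + 0^2)^2) (at 0 within ?S)"
    by (intro tendsto_power tendsto_add tendsto_const lim_p)
  from tendsto_divide[OF tendsto_mult[OF difference_quotient_tendsto_pole lim_sin] this]
  have "((\<lambda>y. p y / y * (y / sin y) / (1 + (p y)^2)^2) \<longlongrightarrow> - 1/2 * 1 / (1 + 0^2)^2)
      (at 0 within ?S)"
    by simp
  from tendsto_mult[OF tendsto_cos[OF tendsto_ident_at] this]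
  have "((\<lambda>y. cos y * (p y / y * (y / sin y) / (1 + (p y)^2)^2)) \<longlongrightarrow> - 1/2) (at 0 within ?S)"
    by simp
  from tendsto_divide[OF tendsto_diff[OF tendsto_EL_source[OF lim_p] this] tendsto_EL_flux'[OF lim_p]]
  have "((\<lambda>y. (EL_source (p y) - cos y * (p y / y * (y / sin y) / (1 + (p y)^2)^2))
      / EL_flux' (p y)) \<longlongrightarrow> (EL_source 0 - - 1/2) / EL_flux' 0) (at 0 within ?S)"
    by (simp add: EL_flux'_def)
  then have lim: "((\<lambda>y. (EL_source (p y) - cos y * (p y / y * (y / sin y) / (1 + (p y)^2)^2))
      / EL_flux' (p y)) \<longlongrightarrow> - 1/2) (at 0 within ?S)"
    by (simp add: EL_source_def EL_flux'_def)
  have "EL_u2 p y = (EL_source (p y) - cos y * (p y / y * (y / sin y) / (1 + (p y)^2)^2))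
      / EL_flux' (p y)" if "y \<noteq> 0" "y \<in> ?S" for y
  proof -
    have "sin y \<noteq> 0"
      using that sin_pos_small[of y] by auto
    then show ?thesis
      using that by (simp add: EL_u2_def EL_flux_def)
  qed
  then have "eventually (\<lambda>y. (EL_source (p y) - cos y * (p y / y * (y / sin y) / (1 + (p y)^2)^2))
      / EL_flux' (p y) = EL_u2 p y) (at 0 within ?S)"
    unfolding eventually_at_filter by (auto intro!: always_eventually)
  then show ?thesis
    by (rule Lim_transform_eventually[OF lim])
qed

lemma continuous_on_EL_u2_interior: "continuous_on {0<..<1/10} (EL_u2 p)"
proof -
  let ?I = "{0<..<1/10::real}"
  have p: "continuous_on ?I p"
    by (rule continuous_on_subset[OF continuous]) auto
  have sin_ne: "\<forall>y\<in>?I. sin y \<noteq> 0"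
  proof
    fix y assume "y \<in> ?I"
    then show "sin y \<noteq> 0"
      using sin_pos_small[of y] by simp
  qed
  have flux'_ne: "\<forall>y\<in>?I. EL_flux' (p y) \<noteq> 0"
  proof
    fix y assume "y \<in> ?I"
    then show "EL_flux' (p y) \<noteq> 0"
      using EL_flux'_bounds(1)[OF abs_le_fifth[of y]] by simp
  qed
  have "continuous_on ?I (\<lambda>y. EL_source (p y) - cos y / sin y * EL_flux (p y))"
    by (intro continuous_on_diff continuous_on_mult continuous_on_divide continuous_on_cos
        continuous_on_sin continuous_on_id continuous_on_EL_source continuous_on_EL_flux p sin_ne)
  from continuous_on_divide[OF this continuous_on_EL_flux'[OF p] flux'_ne]
  show ?thesis
    by (rule continuous_on_eq) (simp add: EL_u2_def)
qed

lemma continuous_on_EL_u2: "continuous_on {0..<1/10} (EL_u2 p)"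
proof -
  have interior: "\<forall>t\<in>{0<..<1/10}. isCont (EL_u2 p) t"
    using continuous_on_EL_u2_interior by (simp add: continuous_on_eq_continuous_at)
  show ?thesis
    unfolding continuous_on_eq_continuous_within
  proof
    fix t :: real assume t: "t \<in> {0..<1/10}"
    show "continuous (at t within {0..<1/10}) (EL_u2 p)"
    proof (cases "t = 0")
      case True
      moreover have "EL_u2 p 0 = - 1/2"
        by (simp add: EL_u2_def)
      ultimately show ?thesis
        using EL_u2_tendsto_pole by (simp add: continuous_within)
    next
      case False
      then have "t \<in> {0<..<1/10}"
        using t by auto
      then have "isCont (EL_u2 p) t"
        using interior by blast
      then show ?thesis
        by (rule continuous_at_imp_continuous_at_within)
    qed
  qed
qed

lemma EL_u2_neg:
  assumes "t \<in> {0..<1/10}"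
  shows "EL_u2 p t < 0"
proof (cases "t = 0")
  case True
  then show ?thesis
    by (simp add: EL_u2_def)
next
  case False
  then have t: "0 < t" "t < 1/10"
    using assms by auto
  then have t': "t \<in> {0..1/10}"
    by simp
  have sin_ge: "9/10 * t \<le> sin t"
    using sin_ge_nine_tenths t by auto
  then have sin_pos: "0 < sin t"
    using t by linarith
  have p_neg: "p t \<le> 0"
    using EL_band_bounds(2)[OF band t'] t by linarith
  have abs_p: "\<bar>p t\<bar> \<le> 7/10 * t"
    using EL_band_abs_le[OF band t'] .
  have "\<bar>p t\<bar>^2 \<le> (1/10)^2"
    using abs_p t by (intro power_mono) auto
  then have "(p t)^2 \<le> 1/100"
    by (simp add: power_divide)
  then have "EL_source (p t) \<le> - 97/100"
    using abs_le_D1[OF abs_EL_source_add_one_le[of "p t"]] by linarith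
  moreover have "- (cos t / sin t * EL_flux (p t)) \<le> 7/9"
  proof -
    have "0 \<le> - EL_flux (p t)" "- EL_flux (p t) \<le> 7/10 * t"
      using EL_flux_nonpos_bounds[OF p_neg] abs_p by auto
    moreover have "0 \<le> cos t" "cos t \<le> 1"
      using t pi_gt3 by (auto intro!: cos_ge_zero)
    ultimately have "cos t * (- EL_flux (p t)) \<le> 7/10 * t"
      by (metis mult_left_le_one_le order_trans)
    then have "cos t * (- EL_flux (p t)) / sin t \<le> (7/10 * t) / (9/10 * t)"
      using sin_pos sin_ge t by (intro frac_le) auto
    then show ?thesis
      using t by simp
  qed
  moreover have "0 < EL_flux' (p t)"
    using EL_flux'_bounds(1)[OF abs_le_fifth[OF t']] by linarith
  ultimately show ?thesis
    using False by (simp add: EL_u2_def divide_neg_pos)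
qed

lemma strictly_decreasing:
  assumes "0 \<le> a" "a < b" "b < 1/10"
  shows "p b < p a"
proof (rule DERIV_neg_imp_decreasing_open[of a b p])
  show "\<exists>y. (p has_real_derivative y) (at x) \<and> y < 0" if "a < x" "x < b" for x
    using has_derivative_EL_u2[of x] EL_u2_neg[of x] that assms by auto
  show "continuous_on {a..b} p"
    by (rule continuous_on_subset[OF continuous]) (use assms in auto)
qed (use assms in auto)

lemma EL_primitive_has_derivative:
  assumes "t \<in> {0..1/10}"
  shows "(EL_primitive u0 p has_real_derivative p t) (at t within {0..1/10})"
  using DERIV_add[OF DERIV_const[of u0] integral_has_real_derivative[OF continuous assms]]
  by (simp add: EL_primitive_def[abs_def])

lemma strictly_concave_EL_primitive: "strictly_concave_on {0..<1/10} (EL_primitive u0 p)"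
proof (rule strictly_concave_on_atLeastLessThan)
  have "continuous_on {0..1/10} (EL_primitive u0 p)"
    using DERIV_continuous_on[OF EL_primitive_has_derivative] .
  then show "continuous_on {0..<1/10} (EL_primitive u0 p)"
    by (rule continuous_on_subset) auto
  show "(EL_primitive u0 p has_real_derivative p x) (at x)" if "0 < x" "x < 1/10" for x
    using EL_primitive_has_derivative[of x] that by (simp add: at_within_Icc_at)
  show "p y < p x" if "0 < x" "x < y" "y < 1/10" for x y
    using strictly_decreasing that by simp
qed

lemma EL_primitive_expansion:
  "(\<lambda>\<theta>. EL_primitive u0 p \<theta> - (u0 - \<theta>^2 / 4)) \<in> O[at_right 0](\<lambda>\<theta>. \<theta>^4)"
proof (rule bigoI[where c = 20])
  define G where "G s = EL_primitive u0 p s - (u0 - s^2 / 4)" for s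
  have "norm (G \<theta>) \<le> 20 * norm (\<theta>^4)" if \<theta>: "\<theta> \<in> {0<..<1/10}" for \<theta>
  proof -
    have "norm (G \<theta> - G 0) \<le> 20 * \<theta>^3 * norm (\<theta> - 0)"
    proof (rule field_differentiable_bound[where S = "{0..\<theta>}"])
      show "(G has_field_derivative p s + s / 2) (at s within {0..\<theta>})" if "s \<in> {0..\<theta>}" for s
      proof -
        have "s \<in> {0..1/10}"
          using that \<theta> by auto
        then have "(EL_primitive u0 p has_real_derivative p s) (at s within {0..\<theta>})"
          by (rule has_field_derivative_subset[OF EL_primitive_has_derivative]) (use \<theta> in auto)
        then show ?thesis
          unfolding G_def[abs_def] by (auto intro!: derivative_eq_intros)
      qed
      show "norm (p s + s / 2) \<le> 20 * \<theta>^3" if "s \<in> {0..\<theta>}" for s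
      proof -
        have "\<bar>p s + s / 2\<bar> \<le> 20 * s^3"
          using band that \<theta> unfolding EL_band_def by auto
        also have "\<dots> \<le> 20 * \<theta>^3"
          using that by (intro mult_left_mono power_mono) auto
        finally show ?thesis
          by simp
      qed
    qed (use \<theta> in auto)
    moreover have "G 0 = 0"
      by (simp add: G_def EL_primitive_def)
    ultimately show ?thesis
      using \<theta> by (simp add: power_def mult_ac)
  qed
  moreover have "eventually (\<lambda>\<theta>. \<theta> \<in> {0<..<1/10}) (at_right (0::real))"
    by (rule eventually_at_right_real) simp
  ultimately show "eventually (\<lambda>\<theta>. norm (EL_primitive u0 p \<theta> - (u0 - \<theta>^2 / 4)) \<le> 20 * norm (\<theta>^4))
      (at_right 0)"
    unfolding G_def by (auto elim: eventually_mono)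
qed

lemma EL_solution_EL_primitive: "EL_solution u0 (1/10) (EL_primitive u0 p) p (EL_u2 p)"
  unfolding EL_solution_def C2_on_halfopen_def
proof (intro conjI ballI)
  fix t :: real assume t: "t \<in> {0..<1/10}"
  then have "t \<in> {0..1/10}"
    by simp
  then show "(EL_primitive u0 p has_real_derivative p t) (at t within {0..<1/10})"
    by (rule has_field_derivative_subset[OF EL_primitive_has_derivative]) auto
  show "(p has_real_derivative EL_u2 p t) (at t within {0..<1/10})"
  proof (cases "t = 0")
    case True
    then show ?thesis
      using has_derivative_at_pole by (simp add: EL_u2_def)
  next
    case False
    then show ?thesis
      using has_derivative_EL_u2[of t] t by (auto intro: has_field_derivative_at_within)
  qed
next
  show "continuous_on {0..<1/10} (EL_u2 p)"
    by (rule continuous_on_EL_u2)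
  show "EL_primitive u0 p 0 = u0"
    by (simp add: EL_primitive_def)
  show "p 0 = 0"
    by (rule EL_band_zero[OF band])
  fix \<theta> :: real assume "\<theta> \<in> {0<..<1/10}"
  from EL_flux_equation[OF this]
  show "((\<lambda>t. sin t * p t / (1 + (p t)^2)^2) has_real_derivative
      sin \<theta> * ((p \<theta>)^2 - 1) / (1 + (p \<theta>)^2)^2) (at \<theta>)"
    by (simp add: EL_flux_def EL_source_def)
qed

end

section \<open>Uniqueness\<close>

lemma EL_gap_contraction:
  fixes q1 q2 :: "real \<Rightarrow> real"
  assumes t: "0 \<le> t0" "t0 < t" "t \<le> t0 + 1/20" "t < 1/10"
    and cont: "continuous_on {t0..t} q1" "continuous_on {t0..t} q2"
    and eq: "q1 t0 = q2 t0"
    and small: "\<And>s. s \<in> {t0..t} \<Longrightarrow> \<bar>q1 s\<bar> \<le> 1/5" "\<And>s. s \<in> {t0..t} \<Longrightarrow> \<bar>q2 s\<bar> \<le> 1/5"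
    and gap: "\<And>s. s \<in> {t0..t} \<Longrightarrow> \<bar>q1 s - q2 s\<bar> \<le> M"
    and eq1: "\<And>\<theta>. \<theta> \<in> {t0<..<t} \<Longrightarrow>
      ((\<lambda>s. sin s * EL_flux (q1 s)) has_real_derivative sin \<theta> * EL_source (q1 \<theta>)) (at \<theta>)"
    and eq2: "\<And>\<theta>. \<theta> \<in> {t0<..<t} \<Longrightarrow>
      ((\<lambda>s. sin s * EL_flux (q2 s)) has_real_derivative sin \<theta> * EL_source (q2 \<theta>)) (at \<theta>)"
  shows "\<bar>q1 t - q2 t\<bar> \<le> 2/15 * M"
proof -
  define E where "E s = sin s * EL_flux (q1 s) - sin s * EL_flux (q2 s)" for s
  have "continuous_on {t0..t} E"
    unfolding E_def by (intro continuous_intros cont)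
  moreover have "(E has_real_derivative sin z * EL_source (q1 z) - sin z * EL_source (q2 z)) (at z)"
    if "t0 < z" "z < t" for z
    unfolding E_def[abs_def] using that by (intro DERIV_diff eq1 eq2) auto
  ultimately obtain z where z: "t0 < z" "z < t"
    and "E t - E t0 = (t - t0) * (sin z * EL_source (q1 z) - sin z * EL_source (q2 z))"
    by (rule MVT_interior[OF \<open>t0 < t\<close>])
  moreover have "E t0 = 0"
    by (simp add: E_def eq)
  ultimately have Et: "E t = (t - t0) * sin z * (EL_source (q1 z) - EL_source (q2 z))"
    by (simp add: algebra_simps)
  have sin_t: "0 < sin t"
    using t sin_pos_small by auto
  have sin_z: "0 \<le> sin z" "sin z \<le> sin t"
    using z t sin_nonneg_small[of z] sin_mono_small[of z t] by auto
  have "z \<in> {t0..t}"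
    using z by simp
  then have "\<bar>EL_source (q1 z) - EL_source (q2 z)\<bar> \<le> 2 * M"
    using EL_source_lipschitz[OF small(1) small(2)] gap by fastforce
  then have "\<bar>E t\<bar> \<le> 1/20 * sin t * (2 * M)"
    unfolding Et abs_mult using t z sin_z by (intro mult_mono) auto
  moreover have "sin t * (3/4 * \<bar>q1 t - q2 t\<bar>) \<le> \<bar>E t\<bar>"
  proof -
    have "3/4 * \<bar>q1 t - q2 t\<bar> \<le> \<bar>EL_flux (q1 t) - EL_flux (q2 t)\<bar>"
      using EL_flux_inverse_lipschitz small t by auto
    then show ?thesis
      using sin_t by (simp add: E_def abs_mult right_diff_distrib[symmetric])
  qed
  moreover have "1/20 * sin t * (2 * M) = sin t * (M / 10)"
    by simp
  ultimately have "sin t * (3/4 * \<bar>q1 t - q2 t\<bar>) \<le> sin t * (M / 10)"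
    by linarith
  then have "3/4 * \<bar>q1 t - q2 t\<bar> \<le> M / 10"
    using sin_t by (simp only: mult_le_cancel_left_pos)
  then show ?thesis
    by simp
qed

lemma EL_agree_on_short_interval:
  fixes q1 q2 :: "real \<Rightarrow> real"
  assumes e: "0 \<le> t0" "0 < e" "e \<le> 1/20" "t0 + e < 1/10"
    and cont: "continuous_on {t0..t0 + e} q1" "continuous_on {t0..t0 + e} q2"
    and eq: "q1 t0 = q2 t0"
    and small: "\<And>s. s \<in> {t0..t0 + e} \<Longrightarrow> \<bar>q1 s\<bar> \<le> 1/5" "\<And>s. s \<in> {t0..t0 + e} \<Longrightarrow> \<bar>q2 s\<bar> \<le> 1/5"
    and eq1: "\<And>\<theta>. \<theta> \<in> {t0<..<t0 + e} \<Longrightarrow>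
      ((\<lambda>s. sin s * EL_flux (q1 s)) has_real_derivative sin \<theta> * EL_source (q1 \<theta>)) (at \<theta>)"
    and eq2: "\<And>\<theta>. \<theta> \<in> {t0<..<t0 + e} \<Longrightarrow>
      ((\<lambda>s. sin s * EL_flux (q2 s)) has_real_derivative sin \<theta> * EL_source (q2 \<theta>)) (at \<theta>)"
    and s: "s \<in> {t0..t0 + e}"
  shows "q1 s = q2 s"
proof -
  let ?K = "{t0..t0 + e}"
  have "?K \<noteq> {}"
    using e(2) by simp
  moreover have "continuous_on ?K (\<lambda>s. \<bar>q1 s - q2 s\<bar>)"
    by (intro continuous_intros cont)
  ultimately obtain t1 where t1: "t1 \<in> ?K"
    and max: "\<And>s. s \<in> ?K \<Longrightarrow> \<bar>q1 s - q2 s\<bar> \<le> \<bar>q1 t1 - q2 t1\<bar>"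
    using continuous_attains_sup[OF compact_Icc] by blast
  have "\<bar>q1 t1 - q2 t1\<bar> = 0"
  proof (cases "t1 = t0")
    case False
    then have "t0 < t1"
      using t1 by auto
    have sub: "{t0..t1} \<subseteq> ?K"
      using t1 by auto
    have "\<bar>q1 t1 - q2 t1\<bar> \<le> 2/15 * \<bar>q1 t1 - q2 t1\<bar>"
      by (rule EL_gap_contraction[OF _ \<open>t0 < t1\<close> _ _ continuous_on_subset[OF cont(1) sub]
            continuous_on_subset[OF cont(2) sub] eq])
        (use e t1 small max eq1 eq2 in auto)
    then show ?thesis
      by simp
  qed (use eq in simp)
  then show ?thesis
    using max[OF s] by simp
qed

lemma EL_local_uniqueness:
  fixes q1 q2 :: "real \<Rightarrow> real"
  assumes cont: "continuous_on {0..<1/10} q1" "continuous_on {0..<1/10} q2"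
    and t0: "t0 \<in> {0..<1/10}" and eq: "q1 t0 = q2 t0"
    and small: "\<And>s. s \<in> {0..<1/10} \<Longrightarrow> \<bar>q2 s\<bar> \<le> 1/10"
    and eq1: "\<And>\<theta>. \<theta> \<in> {0<..<1/10} \<Longrightarrow>
      ((\<lambda>s. sin s * EL_flux (q1 s)) has_real_derivative sin \<theta> * EL_source (q1 \<theta>)) (at \<theta>)"
    and eq2: "\<And>\<theta>. \<theta> \<in> {0<..<1/10} \<Longrightarrow>
      ((\<lambda>s. sin s * EL_flux (q2 s)) has_real_derivative sin \<theta> * EL_source (q2 \<theta>)) (at \<theta>)"
  shows "\<exists>e>0. \<forall>s. t0 \<le> s \<and> s < t0 + e \<longrightarrow> q1 s = q2 s"
proof -
  obtain \<eta> where "\<eta> > 0" and \<eta>: "\<And>s. s \<in> {0..<1/10} \<Longrightarrow> dist s t0 < \<eta> \<Longrightarrow> dist (q1 s) (q1 t0) < 1/10"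
    using cont(1) t0 unfolding continuous_on_iff by (metis zero_less_divide_1_iff zero_less_numeral)
  define e where "e = min (\<eta> / 2) (min (1/20) ((1/10 - t0) / 2))"
  have "e \<le> min (1/20) ((1/10 - t0) / 2)"
    unfolding e_def by (rule min.cobounded2)
  then have e: "0 < e" "e < \<eta>" "e \<le> 1/20" "e \<le> (1/10 - t0) / 2"
    using \<open>\<eta> > 0\<close> t0 by (auto simp: e_def)
  have K: "{t0..t0 + e} \<subseteq> {0..<1/10}"
    using t0 e(4) by auto
  have small1: "\<bar>q1 s\<bar> \<le> 1/5" if "s \<in> {t0..t0 + e}" for s
  proof -
    have "dist (q1 s) (q1 t0) < 1/10"
      using \<eta>[of s] that K e by (auto simp: dist_real_def)
    moreover have "\<bar>q1 t0\<bar> \<le> 1/10"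
      using small[OF t0] eq by simp
    ultimately show ?thesis
      using abs_triangle_ineq2[of "q1 s" "q1 t0"] unfolding dist_real_def by linarith
  qed
  have small2: "\<bar>q2 s\<bar> \<le> 1/5" if "s \<in> {t0..t0 + e}" for s
    using small[of s] that K by auto
  have "q1 s = q2 s" if "s \<in> {t0..t0 + e}" for s
    by (rule EL_agree_on_short_interval[OF _ _ _ _ continuous_on_subset[OF cont(1) K]
          continuous_on_subset[OF cont(2) K] eq small1 small2 _ _ that])
      (use t0 e K eq1 eq2 in auto)
  then show ?thesis
    using e(1) by auto
qed

context integrated_EL_solution
begin

lemma EL_solution_derivative_eq:
  assumes sol: "EL_solution u0 (1/10) v v1 v2" and s: "s \<in> {0..<1/10}"
  shows "v1 s = p s"
proof (rule eq_on_atLeastLessThan_by_continuation[OF _ _ _ _ s])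
  let ?S = "{0..<1/10::real}"
  show cont_v1: "continuous_on ?S v1"
    using sol unfolding EL_solution_def C2_on_halfopen_def by (blast intro: DERIV_continuous_on)
  show cont_p: "continuous_on ?S p"
    by (rule continuous_on_subset[OF continuous]) auto
  show "v1 0 = p 0"
    using sol EL_band_zero[OF band] by (simp add: EL_solution_def)
  show "\<exists>e>0. \<forall>s. t \<le> s \<and> s < t + e \<longrightarrow> v1 s = p s" if "t \<in> ?S" "v1 t = p t" for t
  proof (rule EL_local_uniqueness[OF cont_v1 cont_p that])
    show "\<bar>p s\<bar> \<le> 1/10" if "s \<in> ?S" for s
      using EL_band_abs_le[OF band, of s] that by auto
    show "((\<lambda>s. sin s * EL_flux (v1 s)) has_real_derivative sin \<theta> * EL_source (v1 \<theta>)) (at \<theta>)"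
      if "\<theta> \<in> {0<..<1/10}" for \<theta>
      using sol that by (simp add: EL_solution_def EL_flux_def EL_source_def)
  qed (rule EL_flux_equation)
qed

lemma EL_solution_unique:
  assumes sol: "EL_solution u0 (1/10) v v1 v2" and t: "t \<in> {0..<1/10}"
  shows "v t = EL_primitive u0 p t"
proof -
  let ?S = "{0..<1/10::real}"
  have "((\<lambda>s. v s - EL_primitive u0 p s) has_real_derivative 0) (at s within ?S)" if "s \<in> ?S" for s
  proof -
    have "(v has_real_derivative v1 s) (at s within ?S)"
      using sol that by (simp add: EL_solution_def C2_on_halfopen_def)
    moreover have "s \<in> {0..1/10}"
      using that by simp
    then have "(EL_primitive u0 p has_real_derivative p s) (at s within ?S)"
      by (rule has_field_derivative_subset[OF EL_primitive_has_derivative]) auto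
    ultimately show ?thesis
      using EL_solution_derivative_eq[OF sol that] DERIV_diff by fastforce
  qed
  then obtain c where "\<forall>s\<in>?S. v s - EL_primitive u0 p s = c"
    using has_field_derivative_zero_constant[of ?S "\<lambda>s. v s - EL_primitive u0 p s"]
    by (auto simp: convex_real_interval)
  moreover have "v 0 - EL_primitive u0 p 0 = 0"
    using sol by (simp add: EL_solution_def EL_primitive_def)
  ultimately show ?thesis
    using t by force
qed

end

theorem theorem3p8:
  fixes u0 :: real
  shows "\<exists>\<delta>>0. \<exists>u u1 u2. EL_solution u0 \<delta> u u1 u2 \<and>
     (\<forall>v v1 v2. EL_solution u0 \<delta> v v1 v2 \<longrightarrow> (\<forall>t\<in>{0..<\<delta>}. v t = u t)) \<and>
     u2 0 = -1/2 \<and>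
     strictly_concave_on {0..<\<delta>} u \<and>
     (\<lambda>\<theta>. u \<theta> - (u0 - \<theta>^2 / 4)) \<in> O[at_right 0](\<lambda>\<theta>. \<theta>^4)"
proof -
  obtain p where "integrated_EL_solution p"
    using integrated_EL_solution_exists by blast
  then interpret integrated_EL_solution p .
  have "EL_solution u0 (1/10) (EL_primitive u0 p) p (EL_u2 p)"
    by (rule EL_solution_EL_primitive)
  moreover have "\<forall>v v1 v2. EL_solution u0 (1/10) v v1 v2 \<longrightarrow> (\<forall>t\<in>{0..<1/10}. v t = EL_primitive u0 p t)"
    using EL_solution_unique by blast
  moreover have "EL_u2 p 0 = - 1/2"
    by (simp add: EL_u2_def)
  moreover have "strictly_concave_on {0..<1/10} (EL_primitive u0 p)"
    by (rule strictly_concave_EL_primitive)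
  moreover have "(\<lambda>\<theta>. EL_primitive u0 p \<theta> - (u0 - \<theta>^2 / 4)) \<in> O[at_right 0](\<lambda>\<theta>. \<theta>^4)"
    by (rule EL_primitive_expansion)
  moreover have "(0::real) < 1/10"
    by simp
  ultimately show ?thesis
    by blast
qed

end
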